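(* Let $\mathcal{H}$ be a real Hilbert space of dimension $d>1$, $G>0$, $\mathcal{G}=\{g\in\mathcal{H}:\|g\|\le G\}$, $\theta\in\mathcal{H}$ fixed, and $h:\mathbb{R}\to\mathbb{R}$ an even convex function that is increasing on $[0,\infty)$. Then \[ \min_{w\in\mathcal{H}}\max_{g\in\mathcal{G}}\ \langle w,g\rangle+h(\|\theta-g\|)\ \ge\ h\Big(\sqrt{\|\theta\|^2+G^2}\Big). \] *)

theory Defs
  imports "HOL-Analysis.Analysis"
begin

end

theory Submission
  imports Defs
begin

(* Since the dimension is at least two, some g on the sphere of radius G is orthogonal
   to theta and, after a sign flip, satisfies <w, g> >= 0. By Pythagoras
   |theta - g| = sqrt (|theta|^2 + G^2), so this single g already attains the bound.
   Only the monotonicity of h on [0, oo) is needed, to see that the objective is bounded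
   above on the ball. *)

lemma independent_pair_obtains_orthogonal:
  fixes u v \<theta> :: "'a::real_inner"
  assumes "independent {u, v}" and "u \<noteq> v"
  obtains z where "z \<noteq> 0" and "orthogonal z \<theta>"
proof -
  have indep: "u \<notin> span {v}" "v \<noteq> 0"
    using assms by (auto simp: independent_insert dependent_single)
  show ?thesis
  proof (cases "inner v \<theta> = 0")
    case True
    then show ?thesis using that indep(2) by (simp add: orthogonal_def)
  next
    case False
    define z where "z = u - (inner u \<theta> / inner v \<theta>) *\<^sub>R v"
    have "z \<noteq> 0"
      using indep(1) unfolding z_def by (metis eq_iff_diff_eq_0 span_base span_scale singletonI)
    moreover have "orthogonal z \<theta>"
      using False by (simp add: z_def orthogonal_def inner_diff_left)
    ultimately show ?thesis using that by blast
  qed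
qed

lemma orthogonal_obtains_sphere_point:
  fixes z \<theta> w :: "'a::real_inner"
  assumes "z \<noteq> 0" and "orthogonal z \<theta>" and "G \<ge> 0"
  obtains g where "norm g = G" and "orthogonal \<theta> g" and "inner w g \<ge> 0"
proof -
  define z' where "z' = (if inner w z \<ge> 0 then z else - z)"
  have z': "z' \<noteq> 0" "orthogonal \<theta> z'" "inner w z' \<ge> 0"
    using assms by (auto simp: z'_def orthogonal_def inner_commute)
  define g where "g = (G / norm z') *\<^sub>R z'"
  have "norm g = G" "orthogonal \<theta> g" "inner w g \<ge> 0"
    using z' assms(3) by (auto simp: g_def orthogonal_clauses)
  then show ?thesis using that by blast
qed

lemma norm_diff_orthogonal:
  fixes a b :: "'a::real_inner"
  assumes "orthogonal a b"
  shows "norm (a - b) = sqrt ((norm a)\<^sup>2 + (norm b)\<^sup>2)"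
proof -
  have "(norm (a + - b))\<^sup>2 = (norm a)\<^sup>2 + (norm (- b))\<^sup>2"
    using assms by (intro norm_add_Pythagorean) (simp add: orthogonal_clauses)
  then show ?thesis
    by (metis norm_ge_zero norm_minus_cancel real_sqrt_unique diff_conv_add_uminus)
qed

lemma bdd_above_inner_plus_mono_norm:
  fixes w \<theta> :: "'a::real_inner" and h :: "real \<Rightarrow> real"
  assumes "mono_on {0..} h"
  shows "bdd_above ((\<lambda>g. inner w g + h (norm (\<theta> - g))) ` cball 0 G)"
proof (rule bdd_aboveI2)
  fix x :: 'a
  assume "x \<in> cball 0 G"
  then have x: "norm x \<le> G" by simp
  have "inner w x \<le> norm w * G"
    using Cauchy_Schwarz_ineq2[of w x] x by (meson abs_le_D1 mult_left_mono norm_ge_zero order_trans)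
  moreover have "norm (\<theta> - x) \<le> norm \<theta> + G" "0 \<le> norm \<theta> + G"
    using norm_triangle_ineq4[of \<theta> x] x norm_ge_zero[of x] norm_ge_zero[of \<theta>] by linarith+
  then have "h (norm (\<theta> - x)) \<le> h (norm \<theta> + G)"
    by (intro mono_onD[OF assms]) auto
  ultimately show "inner w x + h (norm (\<theta> - x)) \<le> norm w * G + h (norm \<theta> + G)"
    by linarith
qed

theorem lemma13:
  fixes \<theta> :: "'a::{real_inner, complete_space}"
    and G :: real and h :: "real \<Rightarrow> real"
  assumes dim: "\<exists>u v::'a. u \<noteq> v \<and> independent {u, v}"
    and G_pos: "G > 0"
    and h_even: "\<And>x. h (- x) = h x"
    and h_convex: "convex_on UNIV h"
    and h_mono: "mono_on {0..} h"
  shows "\<forall>w::'a. (SUP g\<in>cball 0 G. inner w g + h (norm (\<theta> - g))) \<ge> h (sqrt ((norm \<theta>)\<^sup>2 + G\<^sup>2))"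
proof
  fix w :: 'a
  obtain z :: 'a where "z \<noteq> 0" "orthogonal z \<theta>"
    using dim independent_pair_obtains_orthogonal by metis
  then obtain g where g: "norm g = G" "orthogonal \<theta> g" "inner w g \<ge> 0"
    using orthogonal_obtains_sphere_point G_pos by (metis less_imp_le)
  have "norm (\<theta> - g) = sqrt ((norm \<theta>)\<^sup>2 + G\<^sup>2)"
    using norm_diff_orthogonal g by metis
  then show "(SUP g\<in>cball 0 G. inner w g + h (norm (\<theta> - g))) \<ge> h (sqrt ((norm \<theta>)\<^sup>2 + G\<^sup>2))"
    using g by (intro cSUP_upper2[OF bdd_above_inner_plus_mono_norm[OF h_mono], of g]) auto
qed

end
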